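(* Let $\beta>1$ be an Ito-Sadahiro number, with $d_{-\beta}(l_\beta)=d_1\cdots d_m\,(d_{m+1}\cdots d_{m+p})^\omega$, where $m\ge0$, $p\ge1$ are minimal such that $d_{-\beta}(l_\beta)$ can be written in this form. Then $\beta$ is an algebraic integer of degree at most $m+p$.
   Context: For $\beta>1$ put $l_\beta=-\frac{\beta}{\beta+1}$, $r_\beta=\frac{1}{\beta+1}$ and $I_\beta=[l_\beta,r_\beta)$. Define $T:I_\beta\to I_\beta$ by $T(x)=-\beta x-\lfloor -\beta x-l_\beta\rfloor$. The $(-\beta)$-expansion of $x\in I_\beta$ is the infinite word $d_{-\beta}(x)=x_1x_2x_3\cdots$ with $x_i=\lfloor -\beta T^{i-1}(x)-l_\beta\rfloor$ for $i\ge1$; then $x=\sum_{i\ge1}x_i(-\beta)^{-i}$. The notation $w^\omega$ denotes infinite repetition of the finite word $w$. A number $\beta>1$ is an Ito-Sadahiro number if $d_{-\beta}(l_\beta)$ is eventually periodic. *)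

theory Defs
  imports "HOL-Computational_Algebra.Polynomial"
begin

definition lbeta :: "real \<Rightarrow> real" where
  "lbeta \<beta> = - \<beta> / (\<beta> + 1)"

definition rbeta :: "real \<Rightarrow> real" where
  "rbeta \<beta> = 1 / (\<beta> + 1)"

definition negT :: "real \<Rightarrow> real \<Rightarrow> real" where
  "negT \<beta> x = - \<beta> * x - of_int \<lfloor>- \<beta> * x - lbeta \<beta>\<rfloor>"

text \<open>The i-th digit (i \<ge> 1) of the (-beta)-expansion of x.\<close>
definition negdigit :: "real \<Rightarrow> real \<Rightarrow> nat \<Rightarrow> int" where
  "negdigit \<beta> x i = \<lfloor>- \<beta> * ((negT \<beta> ^^ (i - 1)) x) - lbeta \<beta>\<rfloor>"

text \<open>Word d (indexed from 1) has the form d_1..d_m (d_{m+1}..d_{m+p})^omega.\<close>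
definition eventually_periodic_with :: "(nat \<Rightarrow> int) \<Rightarrow> nat \<Rightarrow> nat \<Rightarrow> bool" where
  "eventually_periodic_with d m p \<longleftrightarrow> p \<ge> 1 \<and> (\<forall>i > m. d (i + p) = d i)"

definition Ito_Sadahiro :: "real \<Rightarrow> bool" where
  "Ito_Sadahiro \<beta> \<longleftrightarrow> \<beta> > 1 \<and>
     (\<exists>m p. eventually_periodic_with (negdigit \<beta> (lbeta \<beta>)) m p)"

definition alg_degree :: "real \<Rightarrow> nat" where
  "alg_degree x = (LEAST n. \<exists>q :: rat poly. q \<noteq> 0 \<and> degree q = n \<and> poly (map_poly of_rat q) x = 0)"

end

theory Submission
  imports Defs
begin

text \<open>Let y n be the n-th iterate of l_beta under T. Then y (n+1) = -beta * y n - d (n+1), so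
  beyond the preperiod the gap y (n+p) - y n is multiplied by -beta at every step; since the
  orbit stays in I_beta, the gap must vanish: y (m+p) = y m. Because (beta + 1) * l_beta = -beta,
  the shifted orbit y n - l_beta is the value at beta of an integer polynomial of degree n with
  leading coefficient +-1.\<close>

lemma map_poly_of_int_diff:
  "map_poly (of_int :: int \<Rightarrow> 'a :: comm_ring_1) (p - q) = map_poly of_int p - map_poly of_int q"
  by (rule poly_eqI) (simp add: coeff_map_poly)

lemma negT_iterate_Suc:
  "(negT \<beta> ^^ Suc n) x = - \<beta> * (negT \<beta> ^^ n) x - of_int (negdigit \<beta> x (Suc n))"
  by (simp add: negT_def negdigit_def)

lemma negT_in_interval:
  assumes "\<beta> + 1 \<noteq> 0"
  shows "negT \<beta> x \<in> {lbeta \<beta>..<rbeta \<beta>}"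
proof -
  define t where "t = - \<beta> * x - lbeta \<beta>"
  have "negT \<beta> x = lbeta \<beta> + (t - of_int \<lfloor>t\<rfloor>)"
    unfolding negT_def t_def by simp
  moreover have "0 \<le> t - of_int \<lfloor>t\<rfloor>" "t - of_int \<lfloor>t\<rfloor> < 1"
    by linarith+
  moreover have "rbeta \<beta> = lbeta \<beta> + 1"
    using assms by (simp add: lbeta_def rbeta_def field_simps)
  ultimately show ?thesis by simp
qed

lemma negT_iterate_lbeta_in_interval:
  assumes "\<beta> > -1"
  shows "(negT \<beta> ^^ n) (lbeta \<beta>) \<in> {lbeta \<beta>..<rbeta \<beta>}"
proof (cases n)
  case 0
  have "- \<beta> / (\<beta> + 1) < 1 / (\<beta> + 1)"
    using assms by (intro divide_strict_right_mono) simp_all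
  then have "lbeta \<beta> < rbeta \<beta>"
    unfolding lbeta_def rbeta_def .
  with 0 show ?thesis by simp
next
  case (Suc k)
  with assms show ?thesis using negT_in_interval[of \<beta>] by simp
qed

lemma bounded_recurrence_periodic:
  fixes u c :: "nat \<Rightarrow> real"
  assumes a: "\<bar>a\<bar> > 1"
    and rec: "\<And>n. u (Suc n) = a * u n - c (Suc n)"
    and per: "\<And>i. i > m \<Longrightarrow> c (i + p) = c i"
    and bound: "\<And>n. \<bar>u n\<bar> \<le> B"
  shows "u (m + p) = u m"
proof (rule ccontr)
  have gap: "u (m + k + p) - u (m + k) = a ^ k * (u (m + p) - u m)" for k
  proof (induction k)
    case (Suc k)
    have "c (Suc (m + k) + p) = c (Suc (m + k))"
      by (rule per) simp
    then have "u (m + Suc k + p) - u (m + Suc k) = a * (u (m + k + p) - u (m + k))"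
      using rec[of "m + k + p"] rec[of "m + k"] by (simp add: algebra_simps)
    with Suc.IH show ?case by simp
  qed simp
  assume "u (m + p) \<noteq> u m"
  then have c: "\<bar>u (m + p) - u m\<bar> > 0" by simp
  obtain k where k: "2 * B / \<bar>u (m + p) - u m\<bar> < \<bar>a\<bar> ^ k"
    using real_arch_pow[OF a] by blast
  have "\<bar>a\<bar> ^ k * \<bar>u (m + p) - u m\<bar> = \<bar>u (m + k + p) - u (m + k)\<bar>"
    by (simp add: gap abs_mult power_abs)
  also have "\<dots> \<le> 2 * B"
    using bound[of "m + k + p"] bound[of "m + k"] by linarith
  finally show False
    using k c by (simp add: field_simps)
qed

fun orbit_poly :: "(nat \<Rightarrow> int) \<Rightarrow> nat \<Rightarrow> int poly" where
  "orbit_poly d 0 = 0"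
| "orbit_poly d (Suc n) = pCons (- d (Suc n)) (1 - orbit_poly d n)"

lemma coeff_orbit_poly_above:
  "k > n \<Longrightarrow> coeff (orbit_poly d n) k = 0"
proof (induction n arbitrary: k)
  case (Suc n)
  then obtain j where "k = Suc j" "j > n" "j \<noteq> 0"
    by (cases k) auto
  with Suc.IH show ?case by simp
qed simp

lemma coeff_orbit_poly_top:
  "coeff (orbit_poly d (Suc n)) (Suc n) = (-1) ^ n"
  by (induction n) (simp_all add: coeff_orbit_poly_above)

lemma degree_lead_coeff_orbit_poly_diff:
  assumes "m < n"
  shows "degree (orbit_poly d n - orbit_poly d m) = n"
    and "\<bar>lead_coeff (orbit_poly d n - orbit_poly d m)\<bar> = 1"
proof -
  obtain k where n: "n = Suc k"
    using assms by (cases n) auto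
  define P where "P = orbit_poly d n - orbit_poly d m"
  have "coeff (orbit_poly d n) n = (-1) ^ k"
    unfolding n by (rule coeff_orbit_poly_top)
  then have top: "coeff P n = (-1) ^ k"
    using assms by (simp add: P_def coeff_orbit_poly_above)
  have "degree P \<le> n"
    using assms by (intro degree_le) (simp add: P_def coeff_orbit_poly_above)
  moreover have "n \<le> degree P"
    using top by (intro le_degree) simp
  ultimately have "degree P = n" by simp
  with top show "degree (orbit_poly d n - orbit_poly d m) = n"
    and "\<bar>lead_coeff (orbit_poly d n - orbit_poly d m)\<bar> = 1"
    by (simp_all add: P_def)
qed

lemma poly_orbit_poly:
  assumes "\<beta> + 1 \<noteq> 0"
  shows "poly (map_poly of_int (orbit_poly (negdigit \<beta> (lbeta \<beta>)) n)) \<beta>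
           = (negT \<beta> ^^ n) (lbeta \<beta>) - lbeta \<beta>"
proof (induction n)
  case (Suc n)
  let ?l = "lbeta \<beta>" and ?y = "(negT \<beta> ^^ n) (lbeta \<beta>)"
    and ?d = "real_of_int (negdigit \<beta> (lbeta \<beta>) (Suc n))"
  have "poly (map_poly of_int (orbit_poly (negdigit \<beta> ?l) (Suc n))) \<beta>
          = - ?d + \<beta> * (1 - (?y - ?l))"
    by (simp add: map_poly_pCons map_poly_of_int_diff Suc.IH)
  also have "\<dots> = - \<beta> * ?y - ?d - ?l"
    using assms by (simp add: lbeta_def field_simps)
  finally show ?case
    by (simp only: negT_iterate_Suc)
qed simp

lemma algebraic_int_alg_degree_le:
  fixes P :: "int poly" and x :: real
  assumes root: "poly (map_poly of_int P) x = 0"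
    and unit: "\<bar>lead_coeff P\<bar> = 1"
  shows "algebraic_int x \<and> alg_degree x \<le> degree P"
proof
  have "lead_coeff P * lead_coeff P = 1"
    using unit by (metis abs_mult_self_eq mult_1)
  then have "lead_coeff (smult (lead_coeff P) P) = 1"
    by (simp only: lead_coeff_smult)
  moreover have "poly (map_poly of_int (smult (lead_coeff P) P)) x = 0"
    using root by (simp add: map_poly_smult)
  ultimately show "algebraic_int x"
    unfolding algebraic_int_altdef_ipoly by blast
next
  define q where "q = (map_poly of_int P :: rat poly)"
  have "lead_coeff P \<noteq> 0"
    using unit by auto
  then have "P \<noteq> 0"
    by auto
  then have "q \<noteq> 0" "degree q = degree P"
    by (simp_all add: q_def degree_map_poly map_poly_eq_0_iff)
  moreover have "poly (map_poly of_rat q) x = 0"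
    using root by (simp add: q_def map_poly_map_poly o_def)
  ultimately show "alg_degree x \<le> degree P"
    unfolding alg_degree_def by (intro Least_le) blast
qed

theorem corollary1:
  fixes \<beta> :: real and m p :: nat
  assumes "\<beta> > 1"
    and "Ito_Sadahiro \<beta>"
    and "eventually_periodic_with (negdigit \<beta> (lbeta \<beta>)) m p"
    and "\<forall>m' p'. eventually_periodic_with (negdigit \<beta> (lbeta \<beta>)) m' p' \<longrightarrow> m \<le> m' \<and> p \<le> p'"
  shows "algebraic_int \<beta> \<and> alg_degree \<beta> \<le> m + p"
proof -
  define d where "d = negdigit \<beta> (lbeta \<beta>)"
  define y where "y n = (negT \<beta> ^^ n) (lbeta \<beta>)" for n
  define P where "P = orbit_poly d (m + p) - orbit_poly d m"
  have "p \<ge> 1" and per: "\<And>i. i > m \<Longrightarrow> real_of_int (d (i + p)) = of_int (d i)"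
    using assms(3) by (auto simp: eventually_periodic_with_def d_def)
  have rec: "y (Suc n) = - \<beta> * y n - of_int (d (Suc n))" for n
    unfolding y_def d_def by (rule negT_iterate_Suc)
  have "\<bar>y n\<bar> \<le> \<bar>lbeta \<beta>\<bar> + \<bar>rbeta \<beta>\<bar>" for n
    using negT_iterate_lbeta_in_interval[of \<beta> n] assms(1) by (auto simp: y_def)
  with assms(1) have "y (m + p) = y m"
    by (intro bounded_recurrence_periodic[of "- \<beta>", OF _ rec per]) simp_all
  then have root: "poly (map_poly of_int P) \<beta> = 0"
    using assms(1) by (simp add: P_def map_poly_of_int_diff poly_orbit_poly d_def y_def)
  have "m < m + p"
    using \<open>p \<ge> 1\<close> by simp
  then have "degree P = m + p" and "\<bar>lead_coeff P\<bar> = 1"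
    unfolding P_def by (rule degree_lead_coeff_orbit_poly_diff)+
  with algebraic_int_alg_degree_le[OF root] show ?thesis
    by simp
qed

end
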